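(* Let $a=(D,F)$ with $D\neq-1$, $F\neq1$, $F\neq 1/2$. In the projective coordinates $(z,w)=\big(\tfrac1v,\tfrac{1-u}{v}\big)$, the meromorphic extension of $-L_a$, where $L_a=(-v+uv)\partial_u+(u+Du^2+Fv^2)\partial_v$, is \[ \bar X_a=\frac1z\Big(z\big(F+(D+1)z^2-(2D+1)zw+Dw^2\big)\partial_z+w\big(-1+F+(D+1)z^2-(2D+1)zw+Dw^2\big)\partial_w\Big). \] Let \[ g(z,w)=\frac{D}{2(F-1)(D+1)}w^2-\frac{2D+1}{(2F-1)(D+1)}wz+\frac{1}{2(D+1)},\qquad \Psi(z,w)=\Big(\frac{z}{\sqrt{g(z,w)}},\frac{w}{\sqrt{g(z,w)}}\Big). \] Then $\Psi$ is a local analytic change of coordinates near $(z,w)=(0,0)$ with $\Psi^*X_a=(D\Psi)^{-1}(X_a\circ\Psi)=\bar X_a$, where \[ X_a=\frac{1}{xU_a(x,y)}\Big(x(x^2+2F)\partial_x+y(x^2+2F-2)\partial_y\Big),\quad U_a(x,y)=\Big(\frac{2D+1}{2(2F-1)}xy-\frac{D}{4(F-1)}y^2+\frac{D+1}{2}\Big)^{-1/2}. \] In particular, with $\mu=2$, $\varepsilon=-2F$ and $V_a(x)=2-2F-x^2$, one has $X_a=\frac{1}{xU_a(x,y)}\big(x(x^\mu-\varepsilon)\partial_x-V_a(x)y\partial_y\big)$. Moreover, for $F\neq0$, $\bar I(z,w)=\frac wz\big(1+2F\frac{g(z,w)}{z^2}\big)^{-1/(2F)}$ is a first integral of $\bar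 X_a$, and $\Psi$ transforms it into $I(x,y)=\frac yx\big(1+\frac{2F}{x^2}\big)^{-1/(2F)}$.
   Context: $L_a$ is the dehomogenized Loud family of quadratic centers with parameter $a=(D,F)\in\mathbb{R}^2$; the line at infinity corresponds to $z=0$ in the $(z,w)$ chart and to $x=0$ after the change $\Psi$. *)

theory Defs
  imports "HOL-Analysis.Analysis"
begin

definition cscale :: "complex \<Rightarrow> complex \<times> complex \<Rightarrow> complex \<times> complex" where
  "cscale c p = (c * fst p, c * snd p)"

text \<open>Holomorphy in two complex variables: complex Frechet differentiability on an open set.\<close>
definition holo2_on :: "(complex \<times> complex \<Rightarrow> complex \<times> complex) \<Rightarrow> (complex \<times> complex) set \<Rightarrow> bool" where
  "holo2_on f S \<longleftrightarrow> open S \<and> (\<forall>p\<in>S. \<exists>f'. (f has_derivative f') (at p) \<and>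
      (\<forall>c v. f' (cscale c v) = cscale c (f' v)))"

definition holo2c_on :: "(complex \<times> complex \<Rightarrow> complex) \<Rightarrow> (complex \<times> complex) set \<Rightarrow> bool" where
  "holo2c_on f S \<longleftrightarrow> open S \<and> (\<forall>p\<in>S. \<exists>f'. (f has_derivative f') (at p) \<and>
      (\<forall>c v. f' (cscale c v) = c * f' v))"

definition local_analytic_coord_change ::
  "(complex \<times> complex \<Rightarrow> complex \<times> complex) \<Rightarrow> (complex \<times> complex) set \<Rightarrow> complex \<times> complex \<Rightarrow> bool" where
  "local_analytic_coord_change \<Psi> N p0 \<longleftrightarrow> open N \<and> p0 \<in> N \<and> holo2_on \<Psi> N \<and> inj_on \<Psi> N \<and>
      open (\<Psi> ` N) \<and> holo2_on (inv_into N \<Psi>) (\<Psi> ` N)"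

definition La :: "real \<Rightarrow> real \<Rightarrow> complex \<times> complex \<Rightarrow> complex \<times> complex" where
  "La D F = (\<lambda>(u, v). (- v + u * v, u + of_real D * u\<^sup>2 + of_real F * v\<^sup>2))"

definition proj_chart :: "complex \<times> complex \<Rightarrow> complex \<times> complex" where
  "proj_chart = (\<lambda>(u, v). (1 / v, (1 - u) / v))"

definition Xbar :: "real \<Rightarrow> real \<Rightarrow> complex \<times> complex \<Rightarrow> complex \<times> complex" where
  "Xbar D F = (\<lambda>(z, w).
     ((1 / z) * (z * (of_real F + (of_real D + 1) * z\<^sup>2 - (2 * of_real D + 1) * z * w + of_real D * w\<^sup>2)),
      (1 / z) * (w * (-1 + of_real F + (of_real D + 1) * z\<^sup>2 - (2 * of_real D + 1) * z * w + of_real D * w\<^sup>2))))"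

definition gfun :: "real \<Rightarrow> real \<Rightarrow> complex \<times> complex \<Rightarrow> complex" where
  "gfun D F = (\<lambda>(z, w).
     of_real D / (2 * (of_real F - 1) * (of_real D + 1)) * w\<^sup>2
     - (2 * of_real D + 1) / ((2 * of_real F - 1) * (of_real D + 1)) * w * z
     + 1 / (2 * (of_real D + 1)))"

text \<open>Psi(z,w) = (z / sqrt g, w / sqrt g), for a chosen branch r of sqrt g.\<close>
definition Psi :: "(complex \<times> complex \<Rightarrow> complex) \<Rightarrow> complex \<times> complex \<Rightarrow> complex \<times> complex" where
  "Psi r = (\<lambda>(z, w). (z / r (z, w), w / r (z, w)))"

text \<open>U_a = hfun^(-1/2); a branch U of it is any function with U^2 * hfun = 1.\<close>
definition hfun :: "real \<Rightarrow> real \<Rightarrow> complex \<times> complex \<Rightarrow> complex" where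
  "hfun D F = (\<lambda>(x, y).
     (2 * of_real D + 1) / (2 * (2 * of_real F - 1)) * x * y
     - of_real D / (4 * (of_real F - 1)) * y\<^sup>2 + (of_real D + 1) / 2)"

definition Xa :: "real \<Rightarrow> (complex \<times> complex \<Rightarrow> complex) \<Rightarrow> complex \<times> complex \<Rightarrow> complex \<times> complex" where
  "Xa F U = (\<lambda>(x, y).
     (1 / (x * U (x, y)) * (x * (x\<^sup>2 + 2 * of_real F)),
      1 / (x * U (x, y)) * (y * (x\<^sup>2 + 2 * of_real F - 2))))"

definition Va :: "real \<Rightarrow> complex \<Rightarrow> complex" where
  "Va F x = 2 - 2 * of_real F - x\<^sup>2"

text \<open>First integrals, with the principal branch of the complex power.\<close>
definition Ibar :: "real \<Rightarrow> real \<Rightarrow> complex \<times> complex \<Rightarrow> complex" where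
  "Ibar D F = (\<lambda>(z, w). (w / z) * (1 + 2 * of_real F * gfun D F (z, w) / z\<^sup>2) powr (- 1 / (2 * of_real F)))"

definition Ifun :: "real \<Rightarrow> complex \<times> complex \<Rightarrow> complex" where
  "Ifun F = (\<lambda>(x, y). (y / x) * (1 + 2 * of_real F / x\<^sup>2) powr (- 1 / (2 * of_real F)))"

definition first_integral_on ::
  "(complex \<times> complex \<Rightarrow> complex) \<Rightarrow> (complex \<times> complex \<Rightarrow> complex \<times> complex) \<Rightarrow> (complex \<times> complex) set \<Rightarrow> bool" where
  "first_integral_on H X S \<longleftrightarrow> (\<forall>p\<in>S. \<exists>H'. (H has_derivative H') (at p) \<and> H' (X p) = 0)"

end

(* Write rho = r p. Since rho^2 = g and U^2 h = 1, the identity h(z/rho, w/rho) (2 rho)^2 = 1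
   gives U (Psi r p) = +-2 rho; continuity and U(0,0) = 2 r(0,0) pick the sign + near the origin,
   and symmetrically r (Phi U q) = U q / 2 for the map Phi U q = (U q / 2) q. Hence Psi r and
   Phi U are mutually inverse holomorphic maps between neighbourhoods of 0. Since dr = dg / (2 r),
   the transformation rule for X_a reduces to the single identity
   z dg(Xbar) = 2 g Xbar_z - z^2 - 2 F g, which also shows that Ibar is constant along Xbar. *)

theory Submission
  imports Defs
begin

lemma holo2c_on_imp_continuous_on: "holo2c_on f S \<Longrightarrow> continuous_on S f"
  unfolding holo2c_on_def by (metis continuous_at_imp_continuous_on has_derivative_continuous)

lemma holo2_on_imp_continuous_on: "holo2_on f S \<Longrightarrow> continuous_on S f"
  unfolding holo2_on_def by (metis continuous_at_imp_continuous_on has_derivative_continuous)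

lemma holo2c_on_subset: "holo2c_on f S \<Longrightarrow> open T \<Longrightarrow> T \<subseteq> S \<Longrightarrow> holo2c_on f T"
  unfolding holo2c_on_def by blast

lemma holo2_on_subset: "holo2_on f S \<Longrightarrow> open T \<Longrightarrow> T \<subseteq> S \<Longrightarrow> holo2_on f T"
  unfolding holo2_on_def by blast

lemma holo2c_on_inverse:
  assumes "holo2c_on f S" "\<forall>p\<in>S. f p \<noteq> 0"
  shows "holo2c_on (\<lambda>p. 1 / f p) S"
  unfolding holo2c_on_def
proof (intro conjI ballI)
  show "open S" using assms(1) by (simp add: holo2c_on_def)
  fix p assume "p \<in> S"
  then obtain f' where f': "(f has_derivative f') (at p)" "\<forall>c v. f' (cscale c v) = c * f' v"
    using assms(1) by (auto simp: holo2c_on_def)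
  have "((\<lambda>p. 1 / f p) has_derivative (\<lambda>h. - f' h / (f p)\<^sup>2)) (at p)"
    using f'(1) assms(2) \<open>p \<in> S\<close> by (auto intro!: derivative_eq_intros simp: power2_eq_square)
  with f'(2) show "\<exists>f'. ((\<lambda>p. 1 / f p) has_derivative f') (at p) \<and> (\<forall>c v. f' (cscale c v) = c * f' v)"
    by (intro exI[of _ "\<lambda>h. - f' h / (f p)\<^sup>2"]) auto
qed

lemma holo2c_on_divide_const:
  assumes "holo2c_on f S"
  shows "holo2c_on (\<lambda>p. f p / c) S"
  unfolding holo2c_on_def
proof (intro conjI ballI)
  show "open S" using assms by (simp add: holo2c_on_def)
  fix p assume "p \<in> S"
  then obtain f' where f': "(f has_derivative f') (at p)" "\<forall>a v. f' (cscale a v) = a * f' v"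
    using assms by (auto simp: holo2c_on_def)
  then show "\<exists>f'. ((\<lambda>p. f p / c) has_derivative f') (at p) \<and> (\<forall>a v. f' (cscale a v) = a * f' v)"
    by (intro exI[of _ "\<lambda>h. f' h / c"] conjI bounded_linear.has_derivative[OF bounded_linear_divide]) auto
qed

lemma has_derivative_cscale:
  assumes "(c has_derivative c') (at p)"
  shows "((\<lambda>q. cscale (c q) q) has_derivative (\<lambda>h. cscale (c p) h + cscale (c' h) p)) (at p)"
  unfolding cscale_def using assms
  by (auto intro!: derivative_eq_intros simp: algebra_simps)

lemma holo2_on_cscale: "holo2c_on c S \<Longrightarrow> holo2_on (\<lambda>q. cscale (c q) q) S"
  unfolding holo2c_on_def holo2_on_def
proof (elim conjE, intro conjI ballI)
  fix p assume "p \<in> S" and "\<forall>p\<in>S. \<exists>c'. (c has_derivative c') (at p) \<and> (\<forall>a v. c' (cscale a v) = a * c' v)"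
  then obtain c' where c': "(c has_derivative c') (at p)" "\<forall>a v. c' (cscale a v) = a * c' v" by blast
  then show "\<exists>f'. ((\<lambda>q. cscale (c q) q) has_derivative f') (at p) \<and> (\<forall>a v. f' (cscale a v) = cscale a (f' v))"
    by (intro exI[of _ "\<lambda>h. cscale (c p) h + cscale (c' h) p"] conjI has_derivative_cscale)
       (auto simp: cscale_def algebra_simps)
qed

lemma holo2_on_transform:
  assumes "holo2_on f S" "\<forall>x\<in>S. g x = f x"
  shows "holo2_on g S"
  unfolding holo2_on_def
proof (intro conjI ballI)
  show "open S" using assms(1) by (simp add: holo2_on_def)
  fix p assume p: "p \<in> S"
  then obtain f' where "(f has_derivative f') (at p)" "\<forall>c v. f' (cscale c v) = cscale c (f' v)"
    using assms(1) by (auto simp: holo2_on_def)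
  moreover have "(g has_derivative f') (at p)"
    using has_derivative_transform_within_open[OF \<open>(f has_derivative f') (at p)\<close> \<open>open S\<close> p] assms(2) by auto
  ultimately show "\<exists>f'. (g has_derivative f') (at p) \<and> (\<forall>c v. f' (cscale c v) = cscale c (f' v))"
    by blast
qed

lemma branch_agreement_nhd:
  fixes f g :: "'a::topological_space \<Rightarrow> complex"
  assumes "open S" "continuous_on S f" "continuous_on S g" "\<forall>x\<in>S. (f x)\<^sup>2 = (g x)\<^sup>2"
    and "x0 \<in> S" "f x0 = g x0" "g x0 \<noteq> 0"
  obtains W where "open W" "x0 \<in> W" "W \<subseteq> S" "\<forall>x\<in>W. f x = g x \<and> g x \<noteq> 0"
proof
  let ?W = "S \<inter> (\<lambda>x. f x + g x) -` (- {0})"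
  show "open ?W"
    using assms(1-3) by (intro continuous_open_preimage continuous_intros) auto
  show "x0 \<in> ?W" "?W \<subseteq> S" using assms(5-7) by auto
  show "\<forall>x\<in>?W. f x = g x \<and> g x \<noteq> 0"
  proof
    fix x assume x: "x \<in> ?W"
    then have "(f x - g x) * (f x + g x) = 0" "f x + g x \<noteq> 0"
      using assms(4) by (auto simp: algebra_simps power2_eq_square)
    then show "f x = g x \<and> g x \<noteq> 0" by auto
  qed
qed

lemma local_inverse_restrict:
  assumes "open A" "open B" "continuous_on A f" "continuous_on B g"
    and "\<forall>x\<in>A. g (f x) = x" "\<forall>y\<in>B. f (g y) = y"
  shows "open (A \<inter> f -` B)" "open (B \<inter> g -` A)" "f ` (A \<inter> f -` B) = B \<inter> g -` A"
    "inj_on f (A \<inter> f -` B)" "\<forall>y\<in>B \<inter> g -` A. inv_into (A \<inter> f -` B) f y = g y"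
proof -
  show "open (A \<inter> f -` B)" "open (B \<inter> g -` A)"
    using assms(1-4) by (simp_all add: continuous_open_preimage)
  show img: "f ` (A \<inter> f -` B) = B \<inter> g -` A"
  proof
    show "f ` (A \<inter> f -` B) \<subseteq> B \<inter> g -` A" using assms(5) by auto
    show "B \<inter> g -` A \<subseteq> f ` (A \<inter> f -` B)"
    proof
      fix y assume "y \<in> B \<inter> g -` A"
      then have "g y \<in> A \<inter> f -` B" "y = f (g y)" using assms(6) by auto
      then show "y \<in> f ` (A \<inter> f -` B)" by blast
    qed
  qed
  show inj: "inj_on f (A \<inter> f -` B)"
    by (rule inj_on_inverseI[of _ g]) (use assms(5) in auto)
  show "\<forall>y\<in>B \<inter> g -` A. inv_into (A \<inter> f -` B) f y = g y"
  proof
    fix y assume "y \<in> B \<inter> g -` A"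
    then have "g y \<in> A \<inter> f -` B" "f (g y) = y" using assms(6) by auto
    then show "inv_into (A \<inter> f -` B) f y = g y" using inv_into_f_f[OF inj] by metis
  qed
qed

lemma bij_derivative_of_left_inverse:
  fixes f :: "'a::euclidean_space \<Rightarrow> 'a"
  assumes f': "(f has_derivative f') (at p)" and g': "(g has_derivative g') (at (f p))"
    and "open N" "p \<in> N" "\<forall>x\<in>N. g (f x) = x"
  shows "bij f'"
proof -
  have "(g \<circ> f has_derivative g' \<circ> f') (at p)"
    by (rule diff_chain_at[OF f' g'])
  moreover have "(g \<circ> f has_derivative id) (at p)"
    using assms(3-5) by (intro has_derivative_transform_within_open[OF has_derivative_id]) auto
  ultimately have "g' \<circ> f' = id"
    by (rule has_derivative_unique)
  then have "inj f'" by (metis inj_on_id inj_on_imageI2)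
  moreover have "linear f'" using f' has_derivative_linear by blast
  ultimately show "bij f'"
    by (simp add: bij_def linear_injective_imp_surjective)
qed

lemma derivative_of_square_root:
  fixes r g :: "'a::real_normed_vector \<Rightarrow> 'b::real_normed_field"
  assumes "open S" "p \<in> S" "\<forall>x\<in>S. (r x)\<^sup>2 = g x" "r p \<noteq> 0"
    and r': "(r has_derivative r') (at p)" and g': "(g has_derivative g') (at p)"
  shows "r' h = g' h / (2 * r p)"
proof -
  have "((\<lambda>x. (r x)\<^sup>2) has_derivative (\<lambda>h. 2 * r p * r' h)) (at p)"
    using r' by (auto intro!: derivative_eq_intros simp: power2_eq_square)
  then have "(g has_derivative (\<lambda>h. 2 * r p * r' h)) (at p)"
    by (rule has_derivative_transform_within_open[OF _ assms(1,2)]) (use assms(3) in auto)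
  then have "(\<lambda>h. 2 * r p * r' h) = g'"
    using g' by (rule has_derivative_unique)
  then show ?thesis using assms(4) by (auto simp: field_simps)
qed

definition gfun_diff :: "real \<Rightarrow> real \<Rightarrow> complex \<times> complex \<Rightarrow> complex \<times> complex \<Rightarrow> complex" where
  "gfun_diff D F = (\<lambda>(z, w) (a, b).
     of_real D / (2 * (of_real F - 1) * (of_real D + 1)) * (2 * w * b)
     - (2 * of_real D + 1) / ((2 * of_real F - 1) * (of_real D + 1)) * (w * a + b * z))"

lemma gfun_has_derivative: "(gfun D F has_derivative gfun_diff D F p) (at p within X)"
proof -
  have quadratic: "((\<lambda>(z, w). \<alpha> * w\<^sup>2 - \<beta> * w * z + \<gamma>) has_derivative
      (\<lambda>(a, b). \<alpha> * (2 * w0 * b) - \<beta> * (w0 * a + b * z0))) (at (z0, w0) within X)"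
    for \<alpha> \<beta> \<gamma> z0 w0 :: complex
    by (auto intro!: derivative_eq_intros simp: case_prod_unfold fun_eq_iff algebra_simps)
  show ?thesis
    unfolding gfun_def by (cases p) (simp only: gfun_diff_def prod.case quadratic)
qed

(* With the denominators D + 1, F - 1, 2 F - 1 renamed to atoms, field_simps can clear them and
   the identities below become polynomial, hence provable by algebra. *)
lemma loud_param_substitution:
  assumes "D \<noteq> -1" "F \<noteq> 1" "F \<noteq> 1/2"
  obtains P Q R :: complex where "P \<noteq> 0" "Q \<noteq> 0" "R \<noteq> 0"
    "of_real D + 1 = P" "of_real F - 1 = Q" "2 * of_real F - 1 = R"
    "of_real D = P - 1" "of_real F = Q + 1" "R = 2 * Q + 1"
proof
  have "D + 1 \<noteq> 0" "F - 1 \<noteq> 0" "2 * F - 1 \<noteq> 0" using assms by auto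
  then show "complex_of_real D + 1 \<noteq> 0" "complex_of_real F - 1 \<noteq> 0" "2 * complex_of_real F - 1 \<noteq> 0"
    by (metis of_real_1 of_real_add of_real_eq_0_iff, metis of_real_1 of_real_diff of_real_eq_0_iff,
        metis of_real_1 of_real_diff of_real_mult of_real_numeral of_real_eq_0_iff)
qed (simp_all add: algebra_simps)

lemma gfun_diff_Xbar:
  assumes "D \<noteq> -1" "F \<noteq> 1" "F \<noteq> 1/2" "z \<noteq> 0"
  shows "z * gfun_diff D F (z, w) (Xbar D F (z, w))
    = 2 * gfun D F (z, w) * fst (Xbar D F (z, w)) - z\<^sup>2 - 2 * of_real F * gfun D F (z, w)"
proof -
  obtain P Q R :: complex where nz: "P \<noteq> 0" "Q \<noteq> 0" "R \<noteq> 0"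
    and den: "of_real D + 1 = P" "of_real F - 1 = Q" "2 * of_real F - 1 = R"
    and num: "of_real D = P - 1" "of_real F = Q + 1" and R: "R = 2 * Q + 1"
    using loud_param_substitution[OF assms(1-3)] .
  show ?thesis using assms(4) unfolding gfun_diff_def gfun_def Xbar_def prod.case
    by (simp only: den, simp only: num) (simp add: nz field_simps, simp only: R, algebra)
qed

lemma hfun_Psi_identity:
  assumes "D \<noteq> -1" "F \<noteq> 1" "F \<noteq> 1/2" "\<rho> \<noteq> 0"
  shows "hfun D F (z / \<rho>, w / \<rho>) * (2 * \<rho>)\<^sup>2 = 2 * (of_real D + 1) * (\<rho>\<^sup>2 - gfun D F (z, w)) + 1"
proof -
  obtain P Q R :: complex where nz: "P \<noteq> 0" "Q \<noteq> 0" "R \<noteq> 0"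
    and den: "of_real D + 1 = P" "of_real F - 1 = Q" "2 * of_real F - 1 = R"
    and num: "of_real D = P - 1" "of_real F = Q + 1" and R: "R = 2 * Q + 1"
    using loud_param_substitution[OF assms(1-3)] .
  show ?thesis using assms(4) unfolding gfun_def hfun_def prod.case
    by (simp only: den, simp only: num) (simp add: nz field_simps, simp only: R, algebra)
qed

lemma gfun_Phi_identity:
  assumes "D \<noteq> -1" "F \<noteq> 1" "F \<noteq> 1/2"
  shows "2 * (of_real D + 1) * (gfun D F (u / 2 * x, u / 2 * y) - (u / 2)\<^sup>2) = 1 - u\<^sup>2 * hfun D F (x, y)"
proof -
  obtain P Q R :: complex where nz: "P \<noteq> 0" "Q \<noteq> 0" "R \<noteq> 0"
    and den: "of_real D + 1 = P" "of_real F - 1 = Q" "2 * of_real F - 1 = R"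
    and num: "of_real D = P - 1" "of_real F = Q + 1" and R: "R = 2 * Q + 1"
    using loud_param_substitution[OF assms(1-3)] .
  show ?thesis unfolding gfun_def hfun_def prod.case
    by (simp only: den, simp only: num) (simp add: nz field_simps, simp only: R, algebra)
qed

lemma Psi_eq_cscale: "Psi r = (\<lambda>p. cscale (1 / r p) p)"
  by (auto simp: Psi_def cscale_def fun_eq_iff)

lemma holo2_on_Psi:
  assumes "holo2c_on r S" "\<forall>p\<in>S. r p \<noteq> 0"
  shows "holo2_on (Psi r) S"
  unfolding Psi_eq_cscale using assms by (intro holo2_on_cscale holo2c_on_inverse)

(* The inverse of Psi r wherever U (Psi r p) = 2 r p. *)
definition Phi :: "(complex \<times> complex \<Rightarrow> complex) \<Rightarrow> complex \<times> complex \<Rightarrow> complex \<times> complex" where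
  "Phi U q = cscale (U q / 2) q"

lemma Phi_Psi: "r p \<noteq> 0 \<Longrightarrow> U (Psi r p) = 2 * r p \<Longrightarrow> Phi U (Psi r p) = p"
  by (cases p) (simp add: Phi_def Psi_def cscale_def)

lemma Psi_Phi:
  assumes "U q \<noteq> 0" "r (Phi U q) = U q / 2"
  shows "Psi r (Phi U q) = q"
proof -
  have "Psi r (Phi U q) = cscale (1 / (U q / 2)) (Phi U q)"
    by (simp only: Psi_eq_cscale assms(2))
  then show ?thesis using assms(1) by (simp add: Phi_def cscale_def)
qed

lemma Psi_has_derivative:
  assumes "(r has_derivative r') (at p)" "r p \<noteq> 0"
  shows "(Psi r has_derivative (\<lambda>h. cscale (1 / r p) h - cscale (r' h / (r p)\<^sup>2) p)) (at p)"
proof -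
  have "((\<lambda>p. 1 / r p) has_derivative (\<lambda>h. - (r' h / (r p)\<^sup>2))) (at p)"
    using assms by (auto intro!: derivative_eq_intros simp: power2_eq_square)
  from has_derivative_cscale[OF this] show ?thesis
    unfolding Psi_eq_cscale by (simp add: cscale_def)
qed

lemma Psi_pullback_Xbar:
  assumes "D \<noteq> -1" "F \<noteq> 1" "F \<noteq> 1/2" "z \<noteq> 0" "\<rho> \<noteq> 0"
    and "\<rho>\<^sup>2 = gfun D F (z, w)" "U (z / \<rho>, w / \<rho>) = 2 * \<rho>"
  shows "cscale (1 / \<rho>) (Xbar D F (z, w))
      - cscale (gfun_diff D F (z, w) (Xbar D F (z, w)) / (2 * \<rho>) / \<rho>\<^sup>2) (z, w)
    = Xa F U (z / \<rho>, w / \<rho>)"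
proof -
  define A where "A = fst (Xbar D F (z, w))"
  define G where "G = gfun_diff D F (z, w) (Xbar D F (z, w))"
  have X: "Xbar D F (z, w) = (A, w * (A - 1) / z)"
    using assms(4) by (simp add: A_def Xbar_def field_simps)
  have "z * G = 2 * \<rho>\<^sup>2 * A - z\<^sup>2 - 2 * of_real F * \<rho>\<^sup>2"
    unfolding G_def A_def assms(6) by (rule gfun_diff_Xbar[OF assms(1-4)])
  then have G: "G = (2 * \<rho>\<^sup>2 * A - z\<^sup>2 - 2 * of_real F * \<rho>\<^sup>2) / z"
    using assms(4) by (simp add: field_simps)
  show ?thesis
    unfolding G_def[symmetric] unfolding X G Xa_def prod.case assms(7) cscale_def
    using assms(4,5) by (simp add: field_simps power2_eq_square power3_eq_cube)
qed

lemma Ifun_Psi: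
  assumes "\<rho> \<noteq> 0" "\<rho>\<^sup>2 = gfun D F (z, w)"
  shows "Ifun F (z / \<rho>, w / \<rho>) = Ibar D F (z, w)"
proof -
  have "(w / \<rho>) / (z / \<rho>) = w / z" "2 * of_real F / (z / \<rho>)\<^sup>2 = 2 * of_real F * gfun D F (z, w) / z\<^sup>2"
    using assms by (simp_all add: power_divide)
  then show ?thesis unfolding Ifun_def Ibar_def prod.case by (rule arg_cong2)
qed

lemma hfun_Psi:
  assumes "D \<noteq> -1" "F \<noteq> 1" "F \<noteq> 1/2" "r p \<noteq> 0" "(r p)\<^sup>2 = gfun D F p"
  shows "hfun D F (Psi r p) * (2 * r p)\<^sup>2 = 1"
  using hfun_Psi_identity[OF assms(1-4), of "fst p" "snd p"] assms(5)
  by (simp add: Psi_def case_prod_unfold)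

lemma gfun_Phi:
  assumes "D \<noteq> -1" "F \<noteq> 1" "F \<noteq> 1/2" "(U q)\<^sup>2 * hfun D F q = 1"
  shows "gfun D F (Phi U q) = (U q / 2)\<^sup>2"
proof -
  have "2 * (of_real D + 1 :: complex) \<noteq> 0"
    using loud_param_substitution[OF assms(1-3)] by (metis mult_eq_0_iff zero_neq_numeral)
  moreover have "2 * (of_real D + 1) * (gfun D F (Phi U q) - (U q / 2)\<^sup>2) = 0"
    using gfun_Phi_identity[OF assms(1-3), of "U q" "fst q" "snd q"] assms(4)
    by (simp add: Phi_def cscale_def)
  ultimately show ?thesis by simp
qed

locale loud_branches =
  fixes D F :: real and r :: "complex \<times> complex \<Rightarrow> complex" and S :: "(complex \<times> complex) set"
    and U :: "complex \<times> complex \<Rightarrow> complex" and T :: "(complex \<times> complex) set"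
  assumes D_ne: "D \<noteq> -1" and F_ne_1: "F \<noteq> 1" and F_ne_half: "F \<noteq> 1/2"
    and r_holo: "holo2c_on r S" and r_0: "(0, 0) \<in> S"
    and r_sqrt: "\<forall>p\<in>S. (r p)\<^sup>2 = gfun D F p"
    and U_holo: "holo2c_on U T" and U_0: "(0, 0) \<in> T"
    and U_branch: "\<forall>q\<in>T. (U q)\<^sup>2 * hfun D F q = 1"
    and U_r: "U (0, 0) = 2 * r (0, 0)"
begin

lemma open_S: "open S" and open_T: "open T"
  using r_holo U_holo by (auto simp: holo2c_on_def)

lemma r_origin_nonzero: "r (0, 0) \<noteq> 0"
proof
  assume "r (0, 0) = 0"
  then have "gfun D F (0, 0) = 0" using r_sqrt r_0 by force
  moreover obtain P :: complex where "P \<noteq> 0" "of_real D + 1 = P"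
    using loud_param_substitution[OF D_ne F_ne_1 F_ne_half] by metis
  ultimately show False by (simp add: gfun_def)
qed

lemma Psi_holo: "holo2_on (Psi r) (S \<inter> r -` (- {0}))"
proof -
  have "open (S \<inter> r -` (- {0}))"
    using open_S holo2c_on_imp_continuous_on[OF r_holo] by (intro continuous_open_preimage) auto
  then show ?thesis by (intro holo2_on_Psi holo2c_on_subset[OF r_holo]) auto
qed

lemma Phi_holo: "holo2_on (Phi U) T"
  unfolding Phi_def[abs_def] by (intro holo2_on_cscale holo2c_on_divide_const U_holo)

lemma Psi_branch_nhd:
  obtains A where "open A" "(0, 0) \<in> A" "A \<subseteq> S" "\<forall>p\<in>A. r p \<noteq> 0 \<and> Psi r p \<in> T \<and> U (Psi r p) = 2 * r p"
proof -
  let ?S' = "S \<inter> r -` (- {0})"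
  let ?A0 = "?S' \<inter> Psi r -` T"
  have cont_Psi: "continuous_on ?S' (Psi r)" by (rule holo2_on_imp_continuous_on[OF Psi_holo])
  have "open ?S'" using Psi_holo by (simp add: holo2_on_def)
  then have "open ?A0" using cont_Psi open_T by (simp add: continuous_open_preimage)
  moreover have "continuous_on ?A0 (\<lambda>p. U (Psi r p))"
    by (rule continuous_on_compose2[OF holo2c_on_imp_continuous_on[OF U_holo]
          continuous_on_subset[OF cont_Psi]]) auto
  moreover have "continuous_on ?A0 (\<lambda>p. 2 * r p)"
    by (intro continuous_intros continuous_on_subset[OF holo2c_on_imp_continuous_on[OF r_holo]]) auto
  moreover have "\<forall>p\<in>?A0. (U (Psi r p))\<^sup>2 = (2 * r p)\<^sup>2"
  proof
    fix p assume p: "p \<in> ?A0"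
    have U_sq: "(U (Psi r p))\<^sup>2 * hfun D F (Psi r p) = 1" using U_branch p by blast
    have "hfun D F (Psi r p) * (2 * r p)\<^sup>2 = 1"
      using hfun_Psi[OF D_ne F_ne_1 F_ne_half, of r p] r_sqrt p by blast
    then have "(U (Psi r p))\<^sup>2 = (U (Psi r p))\<^sup>2 * hfun D F (Psi r p) * (2 * r p)\<^sup>2"
      by (simp add: mult.assoc)
    then show "(U (Psi r p))\<^sup>2 = (2 * r p)\<^sup>2" by (simp add: U_sq)
  qed
  moreover have "Psi r (0, 0) = (0, 0)" by (simp add: Psi_def)
  then have "(0, 0) \<in> ?A0" "U (Psi r (0, 0)) = 2 * r (0, 0)" "2 * r (0, 0) \<noteq> 0"
    using r_0 U_0 U_r r_origin_nonzero by auto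
  ultimately obtain A where "open A" "(0, 0) \<in> A" "A \<subseteq> ?A0" "\<forall>p\<in>A. U (Psi r p) = 2 * r p"
    by (rule branch_agreement_nhd) blast
  then show ?thesis using that by blast
qed

lemma Phi_branch_nhd:
  obtains B where "open B" "(0, 0) \<in> B" "B \<subseteq> T" "\<forall>q\<in>B. U q \<noteq> 0 \<and> Phi U q \<in> S \<and> r (Phi U q) = U q / 2"
proof -
  let ?B0 = "T \<inter> Phi U -` S"
  have cont_Phi: "continuous_on T (Phi U)" by (rule holo2_on_imp_continuous_on[OF Phi_holo])
  have "open ?B0" using cont_Phi open_T open_S by (simp add: continuous_open_preimage)
  moreover have "continuous_on ?B0 (\<lambda>q. r (Phi U q))"
    by (rule continuous_on_compose2[OF holo2c_on_imp_continuous_on[OF r_holo]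
          continuous_on_subset[OF cont_Phi]]) auto
  moreover have "continuous_on ?B0 (\<lambda>q. U q / 2)"
    by (intro continuous_intros continuous_on_subset[OF holo2c_on_imp_continuous_on[OF U_holo]]) auto
  moreover have "\<forall>q\<in>?B0. (r (Phi U q))\<^sup>2 = (U q / 2)\<^sup>2"
    using r_sqrt U_branch gfun_Phi[OF D_ne F_ne_1 F_ne_half] by auto
  moreover have "Phi U (0, 0) = (0, 0)" by (simp add: Phi_def cscale_def)
  then have "(0, 0) \<in> ?B0" "r (Phi U (0, 0)) = U (0, 0) / 2" "U (0, 0) / 2 \<noteq> 0"
    using r_0 U_0 U_r r_origin_nonzero by auto
  ultimately obtain B where "open B" "(0, 0) \<in> B" "B \<subseteq> ?B0"
      "\<forall>q\<in>B. r (Phi U q) = U q / 2 \<and> U q / 2 \<noteq> 0"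
    by (rule branch_agreement_nhd)
  then show ?thesis by (intro that) auto
qed

lemma Psi_local_coord_change:
  obtains N where "local_analytic_coord_change (Psi r) N (0, 0)" "Psi r ` N \<subseteq> T" "N \<subseteq> S"
    "\<forall>p\<in>N. r p \<noteq> 0 \<and> U (Psi r p) = 2 * r p"
proof -
  obtain A where A: "open A" "(0, 0) \<in> A" "A \<subseteq> S"
      "\<forall>p\<in>A. r p \<noteq> 0 \<and> Psi r p \<in> T \<and> U (Psi r p) = 2 * r p"
    by (rule Psi_branch_nhd)
  obtain B where B: "open B" "(0, 0) \<in> B" "B \<subseteq> T"
      "\<forall>q\<in>B. U q \<noteq> 0 \<and> Phi U q \<in> S \<and> r (Phi U q) = U q / 2"
    by (rule Phi_branch_nhd)
  have "A \<subseteq> S \<inter> r -` (- {0})" using A by auto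
  then have cont_Psi: "continuous_on A (Psi r)"
    using holo2_on_imp_continuous_on[OF Psi_holo] continuous_on_subset by blast
  have cont_Phi: "continuous_on B (Phi U)"
    using holo2_on_imp_continuous_on[OF Phi_holo] continuous_on_subset B(3) by blast
  let ?N = "A \<inter> Psi r -` B" and ?M = "B \<inter> Phi U -` A"
  have "\<forall>x\<in>A. Phi U (Psi r x) = x" "\<forall>y\<in>B. Psi r (Phi U y) = y"
    using A(4) B(4) Phi_Psi Psi_Phi by auto
  note inverse = local_inverse_restrict[OF A(1) B(1) cont_Psi cont_Phi this]
  have N: "open ?N" "?N \<subseteq> S" "Psi r ` ?N = ?M" "inj_on (Psi r) ?N"
      "\<forall>q\<in>?M. inv_into ?N (Psi r) q = Phi U q"
    using inverse A(3) by auto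
  have "holo2_on (Psi r) ?N"
    using N(1,2) A(4) by (intro holo2_on_Psi holo2c_on_subset[OF r_holo]) auto
  moreover have "holo2_on (inv_into ?N (Psi r)) ?M"
    using inverse(2) B(3) N(5) by (intro holo2_on_transform[OF holo2_on_subset[OF Phi_holo]]) auto
  ultimately have "local_analytic_coord_change (Psi r) ?N (0, 0)"
    using N A(2) B(2) inverse(2) unfolding local_analytic_coord_change_def
    by (simp add: Psi_def)
  then show ?thesis using that N A(4) B(3) by blast
qed

lemma Psi_pullback:
  assumes "open N" "N \<subseteq> S" "Psi r ` N \<subseteq> T" "\<forall>q\<in>N. r q \<noteq> 0 \<and> U (Psi r q) = 2 * r q"
    and "p \<in> N" "fst p \<noteq> 0"
  shows "\<exists>\<Psi>'. (Psi r has_derivative \<Psi>') (at p) \<and> bij \<Psi>' \<and> inv \<Psi>' (Xa F U (Psi r p)) = Xbar D F p"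
proof -
  obtain z w where p: "p = (z, w)" by (cases p)
  have pS: "p \<in> S" and rp: "r p \<noteq> 0" and Up: "U (Psi r p) = 2 * r p" and PT: "Psi r p \<in> T"
    using assms by auto
  obtain r' where r': "(r has_derivative r') (at p)" using r_holo pS unfolding holo2c_on_def by blast
  obtain U' where U': "(U has_derivative U') (at (Psi r p))" using U_holo PT unfolding holo2c_on_def by blast
  define \<Psi>' where "\<Psi>' = (\<lambda>h. cscale (1 / r p) h - cscale (r' h / (r p)\<^sup>2) p)"
  have dPsi: "(Psi r has_derivative \<Psi>') (at p)"
    unfolding \<Psi>'_def by (rule Psi_has_derivative[OF r' rp])
  have "((\<lambda>q. U q / 2) has_derivative (\<lambda>h. U' h / 2)) (at (Psi r p))"
    using U' by (auto intro!: derivative_eq_intros)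
  from has_derivative_cscale[OF this]
  have dPhi: "(Phi U has_derivative (\<lambda>h. cscale (U (Psi r p) / 2) h + cscale (U' h / 2) (Psi r p))) (at (Psi r p))"
    unfolding Phi_def[abs_def] .
  have "bij \<Psi>'"
    by (rule bij_derivative_of_left_inverse[OF dPsi dPhi assms(1,5)]) (use assms(4) Phi_Psi in auto)
  moreover have "r' h = gfun_diff D F p h / (2 * r p)" for h
    by (rule derivative_of_square_root[OF open_S pS _ rp r' gfun_has_derivative]) (use r_sqrt in auto)
  then have "\<Psi>' (Xbar D F p) = Xa F U (Psi r p)"
    using Psi_pullback_Xbar[OF D_ne F_ne_1 F_ne_half, of z "r p" w U] assms(6) rp r_sqrt pS Up
    by (simp add: \<Psi>'_def p Psi_def power2_eq_square)
  ultimately have "inv \<Psi>' (Xa F U (Psi r p)) = Xbar D F p"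
    by (metis bij_is_inj inv_f_f)
  with dPsi \<open>bij \<Psi>'\<close> show ?thesis by blast
qed

end

lemma Ibar_has_derivative:
  assumes "fst p \<noteq> 0" "B \<notin> \<real>\<^sub>\<le>\<^sub>0" "B = 1 + 2 * of_real F * gfun D F p / (fst p)\<^sup>2"
    and "a = - 1 / (2 * complex_of_real F)"
  shows "(Ibar D F has_derivative (\<lambda>h. snd p / fst p * (a * B powr (a - 1)
      * (2 * of_real F * (gfun_diff D F p h * fst p - 2 * gfun D F p * fst h) / fst p ^ 3))
    + (snd h * fst p - snd p * fst h) / (fst p)\<^sup>2 * B powr a)) (at p)"
proof -
  have "((\<lambda>q. 1 + 2 * of_real F * gfun D F q / (fst q)\<^sup>2) has_derivative
      (\<lambda>h. 2 * of_real F * (gfun_diff D F p h * (fst p)\<^sup>2 - gfun D F p * (2 * fst p * fst h))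
        / ((fst p)\<^sup>2)\<^sup>2)) (at p)"
    using assms(1) by (auto intro!: derivative_eq_intros gfun_has_derivative simp: power2_eq_square algebra_simps)
  then have "((\<lambda>q. 1 + 2 * of_real F * gfun D F q / (fst q)\<^sup>2) has_derivative
      (\<lambda>h. 2 * of_real F * (gfun_diff D F p h * fst p - 2 * gfun D F p * fst h) / fst p ^ 3)) (at p)"
    by (rule has_derivative_eq_rhs)
       (use assms(1) in \<open>auto simp: fun_eq_iff field_simps power2_eq_square power3_eq_cube\<close>)
  from has_derivative_compose[OF this has_field_derivative_imp_has_derivative[OF
      has_field_derivative_powr[OF assms(2)[unfolded assms(3)], of a]]]
  have dpow: "((\<lambda>q. (1 + 2 * of_real F * gfun D F q / (fst q)\<^sup>2) powr a) has_derivative (\<lambda>h. a * B powr (a - 1)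
      * (2 * of_real F * (gfun_diff D F p h * fst p - 2 * gfun D F p * fst h) / fst p ^ 3))) (at p)"
    by (simp add: assms(3))
  have dquot: "((\<lambda>q. snd q / fst q) has_derivative
      (\<lambda>h. (snd h * fst p - snd p * fst h) / (fst p)\<^sup>2)) (at p)"
    using assms(1) by (auto intro!: derivative_eq_intros simp: power2_eq_square)
  have "Ibar D F = (\<lambda>q. snd q / fst q * (1 + 2 * of_real F * gfun D F q / (fst q)\<^sup>2) powr a)"
    by (auto simp: Ibar_def assms(4) fun_eq_iff)
  then show ?thesis
    using has_derivative_mult[OF dquot dpow] by (simp only: assms(3))
qed

lemma Ibar_first_integral:
  assumes "D \<noteq> -1" "F \<noteq> 1" "F \<noteq> 1/2" "F \<noteq> 0"
  shows "first_integral_on (Ibar D F) (Xbar D F)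
    {p. fst p \<noteq> 0 \<and> (1 + 2 * of_real F * gfun D F p / (fst p)\<^sup>2) \<notin> {t. t \<in> \<real> \<and> Re t \<le> 0}}"
  unfolding first_integral_on_def
proof
  fix p assume "p \<in> {p. fst p \<noteq> 0 \<and> (1 + 2 * of_real F * gfun D F p / (fst p)\<^sup>2) \<notin> {t. t \<in> \<real> \<and> Re t \<le> 0}}"
  then obtain z w where p: "p = (z, w)" and z: "z \<noteq> 0"
    and B_slit: "1 + 2 * of_real F * gfun D F p / (fst p)\<^sup>2 \<notin> \<real>\<^sub>\<le>\<^sub>0"
    by (cases p) (auto simp: complex_nonpos_Reals_iff complex_is_Real_iff)
  define g where "g = gfun D F p"
  define B where "B = 1 + 2 * of_real F * g / z\<^sup>2"
  define a where "a = - 1 / (2 * complex_of_real F)"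
  define A where "A = fst (Xbar D F p)"
  define G where "G = gfun_diff D F p (Xbar D F p)"
  have B0: "B \<noteq> 0" using B_slit by (auto simp: B_def g_def p)
  have X: "Xbar D F p = (A, w * (A - 1) / z)" using z by (simp add: A_def p Xbar_def field_simps)
  have "z * G = 2 * g * A - z\<^sup>2 - 2 * of_real F * g"
    unfolding G_def g_def A_def p by (rule gfun_diff_Xbar[OF assms(1-3) z])
  moreover have "z\<^sup>2 + 2 * of_real F * g = B * z\<^sup>2" using z by (simp add: B_def field_simps)
  ultimately have GA: "G * z - 2 * g * A = - (B * z\<^sup>2)" by (simp add: algebra_simps)
  have "B powr (a - 1) = B powr a / B" using B0 by (simp add: powr_diff)
  then have h1: "a * B powr (a - 1) * (2 * of_real F * (G * z - 2 * g * A) / z ^ 3) = B powr a / z"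
    unfolding GA a_def using B0 assms(4) z by (simp add: field_simps power2_eq_square power3_eq_cube)
  have h2: "(snd (Xbar D F p) * z - w * A) / z\<^sup>2 = - w / z\<^sup>2"
    using z by (simp add: X field_simps)
  have "w / z * (a * B powr (a - 1) * (2 * of_real F * (G * z - 2 * g * A) / z ^ 3))
      + (snd (Xbar D F p) * z - w * A) / z\<^sup>2 * B powr a = 0"
    unfolding h1 h2 using z by (simp add: field_simps power2_eq_square)
  with Ibar_has_derivative[OF _ B_slit _ a_def] z show "\<exists>H'. (Ibar D F has_derivative H') (at p) \<and> H' (Xbar D F p) = 0"
    unfolding G_def A_def B_def g_def p by fastforce
qed

lemma proj_chart_pushforward:
  assumes "v \<noteq> 0"
  shows "\<exists>\<phi>'. (proj_chart has_derivative \<phi>') (at (u, v)) \<and>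
    \<phi>' (- La D F (u, v)) = Xbar D F (proj_chart (u, v))"
proof (intro exI conjI)
  have chart: "proj_chart = (\<lambda>p. (1 / snd p, (1 - fst p) / snd p))"
    by (auto simp: proj_chart_def fun_eq_iff)
  show "(proj_chart has_derivative (\<lambda>h. (- snd h / (v * v), (- fst h * v - (1 - u) * snd h) / (v * v)))) (at (u, v))"
    unfolding chart using assms by (auto intro!: derivative_eq_intros simp: fun_eq_iff field_simps)
  show "(\<lambda>h. (- snd h / (v * v), (- fst h * v - (1 - u) * snd h) / (v * v))) (- La D F (u, v))
      = Xbar D F (proj_chart (u, v))"
    using assms unfolding La_def Xbar_def proj_chart_def by (simp add: field_simps) algebra
qed

lemma Xa_normal_form:
  "let \<mu> = (2::nat); \<epsilon> = - 2 * complex_of_real F in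
     \<forall>V x y. Xa F V (x, y) =
       (1 / (x * V (x, y)) * (x * (x ^ \<mu> - \<epsilon>)), 1 / (x * V (x, y)) * (- (Va F x * y)))"
  by (simp add: Xa_def Va_def algebra_simps)

theorem mainTheorem3:
  fixes D F :: real
    and r :: "complex \<times> complex \<Rightarrow> complex" and S :: "(complex \<times> complex) set"
    and U :: "complex \<times> complex \<Rightarrow> complex" and T :: "(complex \<times> complex) set"
  assumes hD: "D \<noteq> -1" and hF1: "F \<noteq> 1" and hF2: "F \<noteq> 1/2"
    and r_holo: "holo2c_on r S" and r_0: "(0, 0) \<in> S"
    and r_sqrt: "\<forall>p\<in>S. (r p)\<^sup>2 = gfun D F p"
    and U_holo: "holo2c_on U T" and U_0: "(0, 0) \<in> T"
    and U_branch: "\<forall>q\<in>T. (U q)\<^sup>2 * hfun D F q = 1"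
    and U_r: "U (0, 0) = 2 * r (0, 0)"
  shows
    "(\<forall>u v. v \<noteq> 0 \<longrightarrow>
        (\<exists>\<phi>'. (proj_chart has_derivative \<phi>') (at (u, v)) \<and>
              \<phi>' (- La D F (u, v)) = Xbar D F (proj_chart (u, v))))
     \<and> (\<exists>N. local_analytic_coord_change (Psi r) N (0, 0) \<and> Psi r ` N \<subseteq> T \<and>
          (\<forall>p\<in>N. fst p \<noteq> 0 \<longrightarrow>
             (\<exists>\<Psi>'. (Psi r has_derivative \<Psi>') (at p) \<and> bij \<Psi>' \<and>
                    inv \<Psi>' (Xa F U (Psi r p)) = Xbar D F p)) \<and>
          (F \<noteq> 0 \<longrightarrow> (\<forall>p\<in>N. fst p \<noteq> 0 \<longrightarrow> Ifun F (Psi r p) = Ibar D F p)))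
     \<and> (let \<mu> = (2::nat); \<epsilon> = - 2 * complex_of_real F in
          \<forall>V x y. Xa F V (x, y) =
            (1 / (x * V (x, y)) * (x * (x ^ \<mu> - \<epsilon>)),
             1 / (x * V (x, y)) * (- (Va F x * y))))
     \<and> (F \<noteq> 0 \<longrightarrow>
          first_integral_on (Ibar D F) (Xbar D F)
            {p. fst p \<noteq> 0 \<and>
                (1 + 2 * of_real F * gfun D F p / (fst p)\<^sup>2) \<notin> {t. t \<in> \<real> \<and> Re t \<le> 0}})"
proof -
  interpret loud_branches D F r S U T
    using assms by unfold_locales
  obtain N where N: "local_analytic_coord_change (Psi r) N (0, 0)" "Psi r ` N \<subseteq> T" "N \<subseteq> S"
      "\<forall>p\<in>N. r p \<noteq> 0 \<and> U (Psi r p) = 2 * r p"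
    by (rule Psi_local_coord_change)
  have "open N" using N(1) by (simp add: local_analytic_coord_change_def)
  have "Ifun F (Psi r p) = Ibar D F p" if "p \<in> N" for p
    using Ifun_Psi[of "r p" D F "fst p" "snd p"] N(3,4) r_sqrt that by (auto simp: Psi_def case_prod_unfold)
  then show ?thesis
    using proj_chart_pushforward Psi_pullback[OF \<open>open N\<close> N(3,2,4)] N(1,2) Xa_normal_form
      Ibar_first_integral[OF hD hF1 hF2] by blast
qed

end
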